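(* Let $M$ be a matroid on a finite set $E$, let $\mathcal{C}$ be a family of non-spanning circuits of $M$, and let $N$ be the free elevation of $M$. Suppose every cyclic flat of $M$ is a union of circuits in $\mathcal{C}$. Then every cyclic flat of $N$ is a union of circuits in $\mathcal{C}$.
   Context: A cyclic set is a union of circuits; $\emptyset$ counts as cyclic. $M$ is the truncation of $N$ if $r_N(E)=r_M(E)+1$ and $r_M(X)=\min\{r_N(X),r_M(E)\}$ for all $X$. The free erection of $M$ is the maximum, in the weak order, of the set consisting of $M$ and all $N$ whose truncation is $M$. The free elevation of $M$ is obtained by repeatedly taking non-trivial free erections until a matroid with no non-trivial erection is reached. *)

theory Defs
  imports Main
begin

text \<open>A matroid on the finite ground set E is given by its rank function r
  (only the values on subsets of E matter).\<close>

definition matroid :: "'a set \<Rightarrow> ('a set \<Rightarrow> nat) \<Rightarrow> bool" where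
  "matroid E r \<longleftrightarrow> finite E \<and>
     (\<forall>X. X \<subseteq> E \<longrightarrow> r X \<le> card X) \<and>
     (\<forall>X Y. X \<subseteq> Y \<and> Y \<subseteq> E \<longrightarrow> r X \<le> r Y) \<and>
     (\<forall>X Y. X \<subseteq> E \<and> Y \<subseteq> E \<longrightarrow> r (X \<union> Y) + r (X \<inter> Y) \<le> r X + r Y)"

definition indep :: "'a set \<Rightarrow> ('a set \<Rightarrow> nat) \<Rightarrow> 'a set \<Rightarrow> bool" where
  "indep E r X \<longleftrightarrow> X \<subseteq> E \<and> r X = card X"

definition circuit :: "'a set \<Rightarrow> ('a set \<Rightarrow> nat) \<Rightarrow> 'a set \<Rightarrow> bool" where
  "circuit E r C \<longleftrightarrow> C \<subseteq> E \<and> \<not> indep E r C \<and> (\<forall>D. D \<subset> C \<longrightarrow> indep E r D)"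

definition flat :: "'a set \<Rightarrow> ('a set \<Rightarrow> nat) \<Rightarrow> 'a set \<Rightarrow> bool" where
  "flat E r F \<longleftrightarrow> F \<subseteq> E \<and> (\<forall>x \<in> E - F. r F < r (insert x F))"

definition cyclic :: "'a set \<Rightarrow> ('a set \<Rightarrow> nat) \<Rightarrow> 'a set \<Rightarrow> bool" where
  "cyclic E r X \<longleftrightarrow> X \<subseteq> E \<and> (\<exists>\<C>. (\<forall>C\<in>\<C>. circuit E r C) \<and> X = \<Union>\<C>)"

definition cyclic_flat :: "'a set \<Rightarrow> ('a set \<Rightarrow> nat) \<Rightarrow> 'a set \<Rightarrow> bool" where
  "cyclic_flat E r F \<longleftrightarrow> cyclic E r F \<and> flat E r F"

definition is_truncation :: "'a set \<Rightarrow> ('a set \<Rightarrow> nat) \<Rightarrow> ('a set \<Rightarrow> nat) \<Rightarrow> bool" where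
  "is_truncation E rM rN \<longleftrightarrow> matroid E rM \<and> matroid E rN \<and>
     rN E = rM E + 1 \<and> (\<forall>X. X \<subseteq> E \<longrightarrow> rM X = min (rN X) (rM E))"

definition weak_le :: "'a set \<Rightarrow> ('a set \<Rightarrow> nat) \<Rightarrow> ('a set \<Rightarrow> nat) \<Rightarrow> bool" where
  "weak_le E rM rN \<longleftrightarrow> (\<forall>X. indep E rM X \<longrightarrow> indep E rN X)"

definition erections :: "'a set \<Rightarrow> ('a set \<Rightarrow> nat) \<Rightarrow> ('a set \<Rightarrow> nat) set" where
  "erections E rM = insert rM {rN. is_truncation E rM rN}"

definition is_free_erection :: "'a set \<Rightarrow> ('a set \<Rightarrow> nat) \<Rightarrow> ('a set \<Rightarrow> nat) \<Rightarrow> bool" where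
  "is_free_erection E rM rF \<longleftrightarrow> rF \<in> erections E rM \<and> (\<forall>rN \<in> erections E rM. weak_le E rN rF)"

text \<open>Free elevation: repeatedly take non-trivial free erections until a matroid
  with no non-trivial erection is reached. (An erection N of M with
  truncation M is automatically non-trivial, since r_N(E) = r_M(E)+1.)\<close>
inductive free_elevation :: "'a set \<Rightarrow> ('a set \<Rightarrow> nat) \<Rightarrow> ('a set \<Rightarrow> nat) \<Rightarrow> bool"
  for E where
  stop: "\<not> (\<exists>rN. is_truncation E rM rN) \<Longrightarrow> free_elevation E rM rM"
| step: "is_free_erection E rM rF \<Longrightarrow> is_truncation E rM rF \<Longrightarrow>
         free_elevation E rF rN \<Longrightarrow> free_elevation E rM rN"

end

theory Submission
  imports Defs
begin

(* Induct along the elevation, so consider one free erection N of M and put k = r_M(E).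
   A cyclic flat of N of rank less than k, and E itself, is already a cyclic flat of M.
   Any other cyclic flat Z of N is a hyperplane of N. Suppose some x in Z were spanned
   by no subset of Z - {x} of rank less than k. Then raising by one the rank of every
   subset X of Z with x in X and r_N(X - {x}) = k yields a matroid whose truncation is still M,
   and in which x together with a basis of Z - {x} is independent although it is dependent
   in N; this contradicts the freeness of N. So x is spanned by some F inside Z of rank
   less than k, and the closure of a circuit through x in F + x is a cyclic flat of N
   inside Z of rank less than k, hence a cyclic flat of M, hence a union of members of
   the family. *)

lemma matroid_finite: "matroid E r \<Longrightarrow> finite E"
  by (simp add: matroid_def)

lemma rank_le_card: "matroid E r \<Longrightarrow> X \<subseteq> E \<Longrightarrow> r X \<le> card X"
  by (simp add: matroid_def)

lemma rank_mono: "matroid E r \<Longrightarrow> X \<subseteq> Y \<Longrightarrow> Y \<subseteq> E \<Longrightarrow> r X \<le> r Y"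
  by (simp add: matroid_def)

lemma rank_submod:
  "matroid E r \<Longrightarrow> X \<subseteq> E \<Longrightarrow> Y \<subseteq> E \<Longrightarrow> r (X \<union> Y) + r (X \<inter> Y) \<le> r X + r Y"
  by (simp add: matroid_def)

lemma rank_empty: "matroid E r \<Longrightarrow> r {} = 0"
  using rank_le_card[of E r "{}"] by simp

lemma rank_le_rank_insert: "matroid E r \<Longrightarrow> X \<subseteq> E \<Longrightarrow> y \<in> E \<Longrightarrow> r X \<le> r (insert y X)"
  by (rule rank_mono) auto

lemma rank_insert_le:
  assumes m: "matroid E r" and X: "X \<subseteq> E" and y: "y \<in> E"
  shows "r (insert y X) \<le> r X + 1"
proof (cases "y \<in> X")
  case False
  have "r (X \<union> {y}) + r (X \<inter> {y}) \<le> r X + r {y}"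
    using rank_submod[OF m X, of "{y}"] y by simp
  moreover have "r {y} \<le> 1"
    using rank_le_card[OF m, of "{y}"] y by simp
  ultimately show ?thesis
    using False rank_empty[OF m] by (simp add: disjoint_iff)
qed (simp add: insert_absorb)

lemma rank_insert_submod:
  assumes m: "matroid E r" and "S \<subseteq> Z" "Z \<subseteq> E" "y \<in> E" "y \<notin> Z"
  shows "r (insert y Z) + r S \<le> r (insert y S) + r Z"
proof -
  have "Z \<union> insert y S = insert y Z" "Z \<inter> insert y S = S"
    using assms by auto
  then show ?thesis
    using rank_submod[OF m, of Z "insert y S"] assms by (simp add: add.commute)
qed

lemma indep_subset:
  assumes m: "matroid E r" and X: "indep E r X" and YX: "Y \<subseteq> X"
  shows "indep E r Y"
proof -
  have XE: "X \<subseteq> E" and rX: "r X = card X"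
    using X by (auto simp: indep_def)
  have fin: "finite X"
    using XE matroid_finite[OF m] finite_subset by blast
  have "r X \<le> r Y + r (X - Y)"
    using rank_submod[OF m, of Y "X - Y"] rank_empty[OF m] XE YX by (auto simp: Un_absorb1)
  moreover have "r (X - Y) \<le> card (X - Y)" "r Y \<le> card Y"
    using rank_le_card[OF m, of "X - Y"] rank_le_card[OF m, of Y] XE YX by auto
  moreover have "card X = card Y + card (X - Y)"
    using fin YX by (metis card_Diff_subset card_mono finite_subset le_add_diff_inverse)
  ultimately show ?thesis
    using rX XE YX unfolding indep_def by auto
qed

lemma rank_Un_spanned:
  assumes m: "matroid E r" and X: "X \<subseteq> E" and Y: "Y \<subseteq> E"
    and spanned: "\<forall>y\<in>Y. r (insert y X) = r X"
  shows "r (X \<union> Y) = r X"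
proof -
  have "finite Y"
    using Y matroid_finite[OF m] finite_subset by blast
  then show ?thesis
    using Y spanned
  proof (induction Y rule: finite_induct)
    case (insert y Y)
    then have IH: "r (X \<union> Y) = r X" and y: "y \<in> E" "r (insert y X) = r X"
      by auto
    have "r (insert y (X \<union> Y)) + r X \<le> r (X \<union> Y) + r (insert y X)"
      using rank_submod[OF m, of "X \<union> Y" "insert y X"] X insert.prems
      by (simp add: Un_commute Un_left_commute insert_absorb Int_absorb1 Int_insert_right
          split: if_splits)
    moreover have "r X \<le> r (insert y (X \<union> Y))"
      using rank_mono[OF m, of X "insert y (X \<union> Y)"] X insert.prems by auto
    ultimately show ?case
      using IH y by simp
  qed simp
qed

lemma exists_basis:
  assumes m: "matroid E r" and S: "S \<subseteq> E"
  shows "\<exists>B\<subseteq>S. indep E r B \<and> r B = r S"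
proof -
  have fin: "finite S"
    using S matroid_finite[OF m] finite_subset by blast
  have "\<exists>B. (B \<subseteq> S \<and> indep E r B) \<and>
      (\<forall>B'. B' \<subseteq> S \<and> indep E r B' \<longrightarrow> card B' \<le> card B)"
  proof (rule Lattices_Big.ex_has_greatest_nat)
    show "{} \<subseteq> S \<and> indep E r {}"
      using rank_empty[OF m] by (simp add: indep_def)
    show "\<forall>B. B \<subseteq> S \<and> indep E r B \<longrightarrow> card B < card S + 1"
      using fin by (simp add: card_mono less_Suc_eq_le)
  qed
  then obtain B where B: "B \<subseteq> S" "indep E r B"
    and max: "\<And>B'. B' \<subseteq> S \<Longrightarrow> indep E r B' \<Longrightarrow> card B' \<le> card B"
    by blast
  have BE: "B \<subseteq> E"
    using B(1) S by blast
  have finB: "finite B"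
    using B(1) fin by (rule finite_subset)
  have "r (insert y B) = r B" if y: "y \<in> S" for y
  proof (cases "y \<in> B")
    case False
    have card: "card (insert y B) = card B + 1"
      using False finB by simp
    then have "\<not> indep E r (insert y B)"
      using max[of "insert y B"] B(1) y by auto
    then have "r (insert y B) \<noteq> r B + 1"
      using card B(2) BE y S by (auto simp: indep_def)
    moreover have "r (insert y B) \<le> r B + 1" "r B \<le> r (insert y B)"
      using rank_insert_le[OF m BE] rank_le_rank_insert[OF m BE] y S by auto
    ultimately show ?thesis
      by linarith
  qed (simp add: insert_absorb)
  then have "r (B \<union> S) = r B"
    using rank_Un_spanned[OF m BE S] by blast
  then show ?thesis
    using B by (auto simp: Un_absorb1)
qed

lemma dependent_contains_circuit:
  assumes m: "matroid E r" and X: "X \<subseteq> E" "\<not> indep E r X"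
  shows "\<exists>C\<subseteq>X. circuit E r C"
proof -
  have "\<exists>C. (C \<subseteq> X \<and> \<not> indep E r C) \<and>
      (\<forall>D. D \<subseteq> X \<and> \<not> indep E r D \<longrightarrow> card C \<le> card D)"
    by (rule ex_has_least_nat[where k = X]) (use X in blast)
  then obtain C where C: "C \<subseteq> X" "\<not> indep E r C"
    and min: "\<And>D. D \<subseteq> X \<Longrightarrow> \<not> indep E r D \<Longrightarrow> card C \<le> card D"
    by blast
  have finC: "finite C"
    using finite_subset[OF subset_trans[OF C(1) X(1)] matroid_finite[OF m]] .
  have "indep E r D" if D: "D \<subset> C" for D
  proof (rule ccontr)
    assume "\<not> indep E r D"
    then have "card C \<le> card D"
      using min D C(1) by blast
    then show False
      using psubset_card_mono[OF finC D] by simp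
  qed
  then show ?thesis
    using C X(1) unfolding circuit_def by blast
qed

lemma exists_circuit_insert:
  assumes m: "matroid E r" and F: "F \<subseteq> E" and y: "y \<in> E" "y \<notin> F"
    and spanned: "r (insert y F) = r F"
  shows "\<exists>C. circuit E r C \<and> y \<in> C \<and> C \<subseteq> insert y F"
proof -
  obtain B where B: "B \<subseteq> F" "indep E r B" "r B = r F"
    using exists_basis[OF m F] by blast
  have BE: "insert y B \<subseteq> E"
    using B(1) F y(1) by blast
  have finB: "finite B"
    using finite_subset[OF subset_trans[OF B(1) F] matroid_finite[OF m]] .
  have yB: "y \<notin> B"
    using B(1) y(2) by blast
  have "r (insert y B) \<le> r (insert y F)"
    using rank_mono[OF m, of "insert y B" "insert y F"] B(1) F y(1) by blast
  then have "r (insert y B) < card (insert y B)"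
    using B(2,3) spanned finB yB by (simp add: indep_def)
  then have "\<not> indep E r (insert y B)"
    by (simp add: indep_def)
  then obtain C where C: "C \<subseteq> insert y B" "circuit E r C"
    using dependent_contains_circuit[OF m BE] by blast
  have "y \<in> C"
  proof (rule ccontr)
    assume "y \<notin> C"
    then have "C \<subseteq> B"
      using C(1) by blast
    then have "indep E r C"
      using indep_subset[OF m B(2)] by blast
    then show False
      using C(2) unfolding circuit_def by blast
  qed
  then show ?thesis
    using C B(1) by blast
qed

lemma rank_circuit_Diff:
  assumes m: "matroid E r" and C: "circuit E r C" and y: "y \<in> C"
  shows "r (C - {y}) = r C"
proof -
  have CE: "C \<subseteq> E" and dep: "\<not> indep E r C" and ind: "indep E r (C - {y})"
    using C y unfolding circuit_def by blast+
  have "finite C"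
    using CE matroid_finite[OF m] finite_subset by blast
  then have "r (C - {y}) + 1 = card C"
    using ind card_Suc_Diff1[of C y] y by (simp add: indep_def)
  moreover have "r C < card C"
    using dep CE rank_le_card[OF m CE] by (simp add: indep_def)
  moreover have "r (C - {y}) \<le> r C"
    using rank_mono[OF m, of "C - {y}" C] CE by blast
  ultimately show ?thesis
    by linarith
qed

lemma cyclic_iff_rank_Diff:
  assumes m: "matroid E r" and X: "X \<subseteq> E"
  shows "cyclic E r X \<longleftrightarrow> (\<forall>y\<in>X. r (X - {y}) = r X)"
proof
  assume "cyclic E r X"
  then obtain \<C> where circ: "\<forall>C\<in>\<C>. circuit E r C" and X_eq: "X = \<Union>\<C>"
    unfolding cyclic_def by blast
  show "\<forall>y\<in>X. r (X - {y}) = r X"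
  proof
    fix y assume "y \<in> X"
    then obtain C where C: "C \<in> \<C>" "y \<in> C"
      using X_eq by auto
    have CX: "C \<subseteq> X"
      using X_eq C by auto
    have "(X - {y}) \<union> C = X" "(X - {y}) \<inter> C = C - {y}"
      using CX C(2) by auto
    then have "r X + r (C - {y}) \<le> r (X - {y}) + r C"
      using rank_submod[OF m, of "X - {y}" C] X CX by auto
    moreover have "r (X - {y}) \<le> r X"
      using rank_mono[OF m, of "X - {y}" X] X by auto
    moreover have "r (C - {y}) = r C"
      using rank_circuit_Diff[OF m _ C(2)] circ C(1) by blast
    ultimately show "r (X - {y}) = r X"
      by linarith
  qed
next
  assume cyc: "\<forall>y\<in>X. r (X - {y}) = r X"
  have "X \<subseteq> \<Union>{C. circuit E r C \<and> C \<subseteq> X}"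
  proof
    fix y assume y: "y \<in> X"
    have "r (insert y (X - {y})) = r (X - {y})"
      using cyc y by (simp add: insert_absorb)
    then obtain C where C: "circuit E r C" "y \<in> C" "C \<subseteq> insert y (X - {y})"
      using exists_circuit_insert[OF m, of "X - {y}" y] X y by blast
    then have "C \<subseteq> X"
      using y by blast
    then show "y \<in> \<Union>{C. circuit E r C \<and> C \<subseteq> X}"
      using C(1,2) by blast
  qed
  then have "X = \<Union>{C. circuit E r C \<and> C \<subseteq> X}"
    by blast
  then show "cyclic E r X"
    unfolding cyclic_def using X by (intro conjI exI[of _ "{C. circuit E r C \<and> C \<subseteq> X}"]) auto
qed

lemma rank_less_rank_ground:
  assumes m: "matroid E r" and Z: "flat E r Z" "Z \<noteq> E"
  shows "r Z < r E"
proof -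
  obtain y where y: "y \<in> E - Z"
    using Z unfolding flat_def by blast
  then have "r Z < r (insert y Z)"
    using Z unfolding flat_def by blast
  also have "\<dots> \<le> r E"
    using rank_mono[OF m, of "insert y Z" E] y Z unfolding flat_def by blast
  finally show ?thesis .
qed

lemma rank_less_if_not_subset_flat:
  assumes m: "matroid E r" and Z: "flat E r Z" and S: "S \<subseteq> Z" "r S = r Z"
    and T: "S \<subseteq> T" "T \<subseteq> E" "\<not> T \<subseteq> Z"
  shows "r Z < r T"
proof -
  obtain y where y: "y \<in> T" "y \<notin> Z"
    using T by auto
  have ZE: "Z \<subseteq> E" and "r Z < r (insert y Z)"
    using Z y T unfolding flat_def by auto
  moreover have "r (insert y Z) + r S \<le> r (insert y S) + r Z"
    using rank_insert_submod[OF m S(1)] ZE y T by blast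
  moreover have "r (insert y S) \<le> r T"
    using rank_mono[OF m, of "insert y S" T] T y by auto
  ultimately show ?thesis
    using S(2) by linarith
qed

definition cl :: "'a set \<Rightarrow> ('a set \<Rightarrow> nat) \<Rightarrow> 'a set \<Rightarrow> 'a set" where
  "cl E r X = {y\<in>E. r (insert y X) = r X}"

lemma cl_subset_ground: "cl E r X \<subseteq> E"
  by (simp add: cl_def)

lemma subset_cl: "X \<subseteq> E \<Longrightarrow> X \<subseteq> cl E r X"
  by (auto simp: cl_def insert_absorb)

lemma rank_cl:
  assumes m: "matroid E r" and X: "X \<subseteq> E"
  shows "r (cl E r X) = r X"
proof -
  have "r (X \<union> cl E r X) = r X"
    using rank_Un_spanned[OF m X cl_subset_ground] by (simp add: cl_def)
  then show ?thesis
    using subset_cl[OF X] by (simp add: Un_absorb1)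
qed

lemma flat_cl:
  assumes m: "matroid E r" and X: "X \<subseteq> E"
  shows "flat E r (cl E r X)"
  unfolding flat_def
proof (intro conjI ballI cl_subset_ground)
  fix y assume "y \<in> E - cl E r X"
  then have y: "y \<in> E" "r (insert y X) \<noteq> r X"
    by (auto simp: cl_def)
  then have "r X < r (insert y X)"
    using rank_le_rank_insert[OF m X, of y] by linarith
  also have "\<dots> \<le> r (insert y (cl E r X))"
    by (rule rank_mono[OF m]) (use subset_cl[OF X] cl_subset_ground[of E r X] y in auto)
  finally show "r (cl E r X) < r (insert y (cl E r X))"
    using rank_cl[OF m X] by simp
qed

lemma cl_subset_flat:
  assumes m: "matroid E r" and Z: "flat E r Z" and X: "X \<subseteq> Z"
  shows "cl E r X \<subseteq> Z"
proof
  fix y assume "y \<in> cl E r X"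
  then have y: "y \<in> E" "r (insert y X) = r X"
    by (auto simp: cl_def)
  show "y \<in> Z"
  proof (rule ccontr)
    assume "y \<notin> Z"
    moreover have "Z \<subseteq> E"
      using Z by (simp add: flat_def)
    ultimately have "r (insert y Z) + r X \<le> r (insert y X) + r Z" "r Z < r (insert y Z)"
      using rank_insert_submod[OF m X _ y(1)] Z y(1) by (auto simp: flat_def)
    then show False
      using y(2) by simp
  qed
qed

lemma cyclic_cl:
  assumes m: "matroid E r" and X: "cyclic E r X"
  shows "cyclic E r (cl E r X)"
proof -
  have XE: "X \<subseteq> E"
    using X by (simp add: cyclic_def)
  have cyc: "\<forall>y\<in>X. r (X - {y}) = r X"
    using X cyclic_iff_rank_Diff[OF m XE] by blast
  have "r (cl E r X - {z}) = r (cl E r X)" if "z \<in> cl E r X" for z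
  proof -
    have "r X \<le> r (cl E r X - {z})"
    proof (cases "z \<in> X")
      case True
      have "r (X - {z}) \<le> r (cl E r X - {z})"
        by (rule rank_mono[OF m]) (use subset_cl[OF XE] cl_subset_ground[of E r X] in auto)
      then show ?thesis
        using cyc True by simp
    next
      case False
      then show ?thesis
        by (intro rank_mono[OF m]) (use subset_cl[OF XE] cl_subset_ground[of E r X] in auto)
    qed
    moreover have "r (cl E r X - {z}) \<le> r (cl E r X)"
      by (rule rank_mono[OF m]) (use cl_subset_ground[of E r X] in auto)
    ultimately show ?thesis
      using rank_cl[OF m XE] by simp
  qed
  then show ?thesis
    using cyclic_iff_rank_Diff[OF m cl_subset_ground] by blast
qed

lemma cyclic_flat_through_spanned:
  assumes m: "matroid E r" and Z: "flat E r Z" and F: "insert x F \<subseteq> Z" "x \<notin> F"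
    and spanned: "r (insert x F) = r F"
  shows "\<exists>W. cyclic_flat E r W \<and> x \<in> W \<and> W \<subseteq> Z \<and> r W \<le> r F"
proof -
  have ZE: "Z \<subseteq> E"
    using Z by (simp add: flat_def)
  have FE: "F \<subseteq> E" and xE: "x \<in> E"
    using F ZE by auto
  obtain C where C: "circuit E r C" "x \<in> C" "C \<subseteq> insert x F"
    using exists_circuit_insert[OF m FE xE F(2) spanned] by blast
  have CE: "C \<subseteq> E"
    using C(1) by (simp add: circuit_def)
  have "cyclic E r C"
    unfolding cyclic_def using CE C(1) by (intro conjI exI[of _ "{C}"]) auto
  then have "cyclic_flat E r (cl E r C)"
    unfolding cyclic_flat_def using cyclic_cl[OF m] flat_cl[OF m CE] by blast
  moreover have "r (cl E r C) \<le> r F"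
    using rank_cl[OF m CE] rank_mono[OF m C(3)] FE xE spanned by simp
  moreover have "x \<in> cl E r C" "cl E r C \<subseteq> Z"
    using C(2,3) subset_cl[OF CE] cl_subset_flat[OF m Z, of C] F(1) by auto
  ultimately show ?thesis
    by blast
qed

lemma cyclic_flat_of_truncation:
  assumes tr: "is_truncation E rM rN" and W: "cyclic_flat E rN W"
    and small: "rN W < rM E \<or> W = E"
  shows "cyclic_flat E rM W"
proof -
  have mM: "matroid E rM" and mN: "matroid E rN"
    and rM: "\<And>X. X \<subseteq> E \<Longrightarrow> rM X = min (rN X) (rM E)"
    using tr unfolding is_truncation_def by blast+
  have WE: "W \<subseteq> E" and flN: "flat E rN W"
    using W by (auto simp: cyclic_flat_def flat_def)
  have "\<forall>y\<in>W. rN (W - {y}) = rN W"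
    using W cyclic_iff_rank_Diff[OF mN WE] by (simp add: cyclic_flat_def)
  then have "\<forall>y\<in>W. rM (W - {y}) = rM W"
    using rM WE by (metis Diff_subset order_trans)
  then have "cyclic E rM W"
    using cyclic_iff_rank_Diff[OF mM WE] by blast
  moreover have "flat E rM W"
    unfolding flat_def
  proof (intro conjI ballI WE)
    fix y assume y: "y \<in> E - W"
    then have "rN W < rM E"
      using small by blast
    moreover have "rN W < rN (insert y W)"
      using flN y by (simp add: flat_def)
    ultimately show "rM W < rM (insert y W)"
      using rM[OF WE] rM[of "insert y W"] WE y by simp
  qed
  ultimately show ?thesis
    by (simp add: cyclic_flat_def)
qed

locale hyperplane_lift =
  fixes E :: "'a set" and r :: "'a set \<Rightarrow> nat" and Z :: "'a set" and x :: 'a and k :: nat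
  assumes matroid: "matroid E r"
    and flat_Z: "flat E r Z" and rank_Z: "r Z = k" and rank_E: "r E = k + 1"
    and x_in_Z: "x \<in> Z"
    and x_free: "\<And>F. F \<subseteq> Z - {x} \<Longrightarrow> r F < k \<Longrightarrow> r (insert x F) = r F + 1"
begin

definition raised :: "'a set \<Rightarrow> bool" where
  "raised X \<longleftrightarrow> x \<in> X \<and> X \<subseteq> Z \<and> r (X - {x}) = k"

definition lift_rank :: "'a set \<Rightarrow> nat" where
  "lift_rank X = r X + (if raised X then 1 else 0)"

lemma Z_subset_ground: "Z \<subseteq> E"
  using flat_Z by (simp add: flat_def)

lemma rank_le_k: "X \<subseteq> Z \<Longrightarrow> r X \<le> k"
  using rank_mono[OF matroid _ Z_subset_ground] rank_Z by metis

lemma rank_raised: "raised X \<Longrightarrow> r X = k"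
  using rank_le_k[of X] rank_mono[OF matroid, of "X - {x}" X] Z_subset_ground
  unfolding raised_def by auto

lemma lift_rank_eq_Suc:
  assumes Y: "raised Y" and T: "Y \<subseteq> T" "T \<subseteq> E"
  shows "lift_rank T = k + 1"
proof (cases "T \<subseteq> Z")
  case True
  have "k \<le> r (T - {x})"
    using Y T rank_mono[OF matroid, of "Y - {x}" "T - {x}"] unfolding raised_def by auto
  then have "raised T"
    using Y T True rank_le_k[of "T - {x}"] unfolding raised_def by auto
  then show ?thesis
    using rank_raised by (simp add: lift_rank_def)
next
  case False
  have "r Z < r T"
    using rank_less_if_not_subset_flat[OF matroid flat_Z, of "Y - {x}" T] Y T False rank_Z
    unfolding raised_def by auto
  moreover have "r T \<le> k + 1"
    using rank_mono[OF matroid T(2)] rank_E by simp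
  ultimately show ?thesis
    using False rank_Z unfolding lift_rank_def raised_def by simp
qed

lemma lift_rank_le_card:
  assumes X: "X \<subseteq> E"
  shows "lift_rank X \<le> card X"
proof (cases "raised X")
  case True
  then have "x \<in> X" "r (X - {x}) = k"
    by (auto simp: raised_def)
  moreover have "finite X"
    using X matroid_finite[OF matroid] finite_subset by blast
  moreover have "r (X - {x}) \<le> card (X - {x})"
    using rank_le_card[OF matroid, of "X - {x}"] X by blast
  ultimately have "k + 1 \<le> card X"
    using card_Suc_Diff1[of X x] by simp
  then show ?thesis
    using True rank_raised by (simp add: lift_rank_def)
next
  case False
  then show ?thesis
    using rank_le_card[OF matroid X] by (simp add: lift_rank_def)
qed

lemma lift_rank_mono:
  assumes XY: "X \<subseteq> Y" and Y: "Y \<subseteq> E"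
  shows "lift_rank X \<le> lift_rank Y"
proof (cases "raised X")
  case True
  then show ?thesis
    using lift_rank_eq_Suc[OF True order_refl] lift_rank_eq_Suc[OF True XY Y] XY Y by simp
next
  case False
  then show ?thesis
    using rank_mono[OF matroid XY Y] by (simp add: lift_rank_def)
qed

lemma rank_not_raised:
  assumes W: "W \<subseteq> Z" "\<not> raised W"
  shows "r W = r (W - {x}) + (if x \<in> W then 1 else 0)"
proof (cases "x \<in> W")
  case True
  then have "r (W - {x}) < k"
    using W rank_le_k[of "W - {x}"] unfolding raised_def by fastforce
  then have "r (insert x (W - {x})) = r (W - {x}) + 1"
    using W(1) by (intro x_free) auto
  then show ?thesis
    using True by (simp add: insert_absorb)
qed simp

lemma rank_submod_strict:
  assumes X: "X \<subseteq> E" and Y: "Y \<subseteq> E"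
    and raised: "raised (X \<union> Y)" "\<not> raised X" "\<not> raised Y"
  shows "r (X \<union> Y) + r (X \<inter> Y) < r X + r Y"
proof -
  have XZ: "X \<subseteq> Z" "Y \<subseteq> Z" and x: "x \<in> X \<union> Y"
    using raised(1) by (auto simp: raised_def)
  have xE: "x \<in> E"
    using x X Y by blast
  have rX: "r X = r (X - {x}) + (if x \<in> X then 1 else 0)"
    and rY: "r Y = r (Y - {x}) + (if x \<in> Y then 1 else 0)"
    using rank_not_raised XZ raised by auto
  have rI: "r (X \<inter> Y) \<le> r ((X - {x}) \<inter> (Y - {x})) + (if x \<in> X \<inter> Y then 1 else 0)"
  proof (cases "x \<in> X \<inter> Y")
    case True
    then have "insert x ((X - {x}) \<inter> (Y - {x})) = X \<inter> Y"
      by auto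
    then show ?thesis
      using rank_insert_le[OF matroid, of "(X - {x}) \<inter> (Y - {x})" x] X xE True by auto
  next
    case False
    then have "(X - {x}) \<inter> (Y - {x}) = X \<inter> Y"
      by auto
    then show ?thesis
      by simp
  qed
  have "r ((X - {x}) \<union> (Y - {x})) + r ((X - {x}) \<inter> (Y - {x})) \<le> r (X - {x}) + r (Y - {x})"
    by (rule rank_submod[OF matroid]) (use X Y in auto)
  moreover have "(X - {x}) \<union> (Y - {x}) = (X \<union> Y) - {x}"
    by auto
  moreover have "r ((X \<union> Y) - {x}) = r (X \<union> Y)"
    using raised(1) rank_raised[OF raised(1)] by (simp add: raised_def)
  ultimately have "r (X \<union> Y) + r ((X - {x}) \<inter> (Y - {x})) \<le> r (X - {x}) + r (Y - {x})"
    by simp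
  moreover have "(if x \<in> X then 1 else 0) + (if x \<in> Y then 1 else 0)
      = (if x \<in> X \<inter> Y then 1 else 0) + (1::nat)"
    using x by auto
  ultimately show ?thesis
    using rX rY rI by linarith
qed

lemma lift_rank_submod:
  assumes X: "X \<subseteq> E" and Y: "Y \<subseteq> E"
  shows "lift_rank (X \<union> Y) + lift_rank (X \<inter> Y) \<le> lift_rank X + lift_rank Y"
proof -
  consider "raised (X \<inter> Y)"
    | "raised (X \<union> Y)" "\<not> raised X" "\<not> raised Y" "\<not> raised (X \<inter> Y)"
    | "\<not> raised (X \<inter> Y)" "\<not> (raised (X \<union> Y) \<and> \<not> raised X \<and> \<not> raised Y)"
    by blast
  then show ?thesis
  proof cases
    case 1
    then show ?thesis
      using lift_rank_eq_Suc[OF 1] X Y by (simp add: le_infI1 le_supI1)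
  next
    case 2
    then show ?thesis
      using rank_submod_strict[OF X Y] by (simp add: lift_rank_def)
  next
    case 3
    then show ?thesis
      using rank_submod[OF matroid X Y] by (auto simp: lift_rank_def)
  qed
qed

lemma matroid_lift_rank: "matroid E lift_rank"
  unfolding matroid_def
  using matroid_finite[OF matroid] lift_rank_le_card lift_rank_mono lift_rank_submod by blast

lemma is_truncation_lift_rank:
  assumes tr: "is_truncation E rM r"
  shows "is_truncation E rM lift_rank"
proof -
  have mM: "matroid E rM" and rE: "r E = rM E + 1"
    and rM_eq: "\<And>X. X \<subseteq> E \<Longrightarrow> rM X = min (r X) (rM E)"
    using tr unfolding is_truncation_def by blast+
  have rM: "rM E = k"
    using rE rank_E by simp
  have "\<not> E \<subseteq> Z"
    using rank_Z rank_E Z_subset_ground by auto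
  then have "lift_rank E = rM E + 1"
    using rank_E rM by (simp add: lift_rank_def raised_def)
  moreover have "rM X = min (lift_rank X) (rM E)" if "X \<subseteq> E" for X
    using rM_eq[OF that] rank_raised[of X] rM by (simp add: lift_rank_def)
  ultimately show ?thesis
    unfolding is_truncation_def using mM matroid_lift_rank by blast
qed

lemma not_weak_le_lift_rank:
  assumes cyclic_at_x: "r (Z - {x}) = k"
  shows "\<not> weak_le E lift_rank r"
proof -
  obtain B where B: "B \<subseteq> Z - {x}" "indep E r B" "r B = k"
    using exists_basis[OF matroid, of "Z - {x}"] Z_subset_ground cyclic_at_x by auto
  define S where "S = insert x B"
  have SE: "S \<subseteq> E" and xB: "x \<notin> B"
    using B(1) x_in_Z Z_subset_ground by (auto simp: S_def)
  have "raised S"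
    using B x_in_Z xB by (auto simp: raised_def S_def)
  then have rS: "r S = k"
    by (rule rank_raised)
  then have "lift_rank S = k + 1"
    using \<open>raised S\<close> by (simp add: lift_rank_def)
  moreover have "finite B"
    using finite_subset[OF SE matroid_finite[OF matroid]] by (simp add: S_def)
  then have "card S = k + 1"
    using B(2,3) xB unfolding S_def indep_def by simp
  ultimately have "indep E lift_rank S" "\<not> indep E r S"
    using SE rS unfolding indep_def by simp_all
  then show ?thesis
    unfolding weak_le_def by blast
qed

end

lemma free_erection_hyperplane_spanned:
  assumes tr: "is_truncation E rM rN" and fr: "is_free_erection E rM rN"
    and Z: "flat E rN Z" "rN Z = rM E"
    and x: "x \<in> Z" "rN (Z - {x}) = rM E"
  shows "\<exists>F\<subseteq>Z - {x}. rN F < rM E \<and> rN (insert x F) = rN F"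
proof (rule ccontr)
  assume not_spanned: "\<not> ?thesis"
  have mN: "matroid E rN" and rE: "rN E = rM E + 1"
    using tr unfolding is_truncation_def by blast+
  have ZE: "Z \<subseteq> E"
    using Z by (simp add: flat_def)
  interpret hyperplane_lift E rN Z x "rM E"
  proof (unfold_locales)
    fix F assume F: "F \<subseteq> Z - {x}" "rN F < rM E"
    have FE: "F \<subseteq> E" and xE: "x \<in> E"
      using F ZE x by auto
    have "rN (insert x F) \<noteq> rN F"
      using F not_spanned by blast
    moreover have "rN (insert x F) \<le> rN F + 1" "rN F \<le> rN (insert x F)"
      using rank_insert_le[OF mN FE xE] rank_le_rank_insert[OF mN FE xE] .
    ultimately show "rN (insert x F) = rN F + 1"
      by linarith
  qed (use mN Z x rE in auto)
  have "lift_rank \<in> erections E rM"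
    using is_truncation_lift_rank[OF tr] by (simp add: erections_def)
  then show False
    using fr not_weak_le_lift_rank x(2) unfolding is_free_erection_def by blast
qed

lemma free_erection_hyperplane_point_in_cyclic_flat:
  assumes tr: "is_truncation E rM rN" and fr: "is_free_erection E rM rN"
    and Z: "cyclic_flat E rN Z" "rN Z = rM E" and x: "x \<in> Z"
  shows "\<exists>W. cyclic_flat E rM W \<and> x \<in> W \<and> W \<subseteq> Z"
proof -
  have mN: "matroid E rN"
    using tr unfolding is_truncation_def by blast
  have ZE: "Z \<subseteq> E" and flZ: "flat E rN Z"
    using Z by (auto simp: cyclic_flat_def flat_def)
  have "rN (Z - {x}) = rM E"
    using Z cyclic_iff_rank_Diff[OF mN ZE] x by (simp add: cyclic_flat_def)
  then obtain F where F: "F \<subseteq> Z - {x}" "rN F < rM E" "rN (insert x F) = rN F"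
    using free_erection_hyperplane_spanned[OF tr fr flZ Z(2) x] by blast
  have "insert x F \<subseteq> Z" "x \<notin> F"
    using F(1) x by auto
  then obtain W where W: "cyclic_flat E rN W" "x \<in> W" "W \<subseteq> Z" "rN W \<le> rN F"
    using cyclic_flat_through_spanned[OF mN flZ _ _ F(3)] by blast
  then have "cyclic_flat E rM W"
    using cyclic_flat_of_truncation[OF tr W(1)] F(2) by simp
  then show ?thesis
    using W(2,3) by blast
qed

lemma cyclic_flat_covered_free_erection:
  assumes tr: "is_truncation E rM rN" and fr: "is_free_erection E rM rN"
    and cover: "\<forall>F. cyclic_flat E rM F \<longrightarrow> F = \<Union>{C\<in>\<C>. C \<subseteq> F}"
    and Z: "cyclic_flat E rN Z"
  shows "Z = \<Union>{C\<in>\<C>. C \<subseteq> Z}"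
proof (cases "rN Z < rM E \<or> Z = E")
  case True
  then show ?thesis
    using cyclic_flat_of_truncation[OF tr Z] cover by blast
next
  case False
  have mN: "matroid E rN" and rE: "rN E = rM E + 1"
    using tr unfolding is_truncation_def by blast+
  have "flat E rN Z"
    using Z by (simp add: cyclic_flat_def)
  then have rZ: "rN Z = rM E"
    using False rank_less_rank_ground[OF mN] rE by fastforce
  have "x \<in> \<Union>{C\<in>\<C>. C \<subseteq> Z}" if x: "x \<in> Z" for x
  proof -
    obtain W where W: "cyclic_flat E rM W" "x \<in> W" "W \<subseteq> Z"
      using free_erection_hyperplane_point_in_cyclic_flat[OF tr fr Z rZ x] by blast
    then have "W \<subseteq> \<Union>{C\<in>\<C>. C \<subseteq> W}"
      using cover by (metis equalityD1)
    then obtain C where "C \<in> \<C>" "C \<subseteq> W" "x \<in> C"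
      using W(2) by blast
    then show ?thesis
      using W(3) by blast
  qed
  then show ?thesis
    by (intro equalityI subsetI) blast+
qed

theorem lemma3p6:
  fixes E :: "'a set" and rM rN :: "'a set \<Rightarrow> nat" and \<C> :: "'a set set"
  assumes "matroid E rM"
    and "\<forall>C\<in>\<C>. circuit E rM C \<and> rM C < rM E"
    and "free_elevation E rM rN"
    and "\<forall>F. cyclic_flat E rM F \<longrightarrow> F = \<Union>{C\<in>\<C>. C \<subseteq> F}"
  shows "\<forall>F. cyclic_flat E rN F \<longrightarrow> F = \<Union>{C\<in>\<C>. C \<subseteq> F}"
  using assms(3,4)
proof (induction rule: free_elevation.induct)
  case (stop rM)
  show ?case
    by (rule stop.prems)
next
  case (step rM rF rN)
  have "\<forall>F. cyclic_flat E rF F \<longrightarrow> F = \<Union>{C\<in>\<C>. C \<subseteq> F}"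
    using cyclic_flat_covered_free_erection[OF step.hyps(2,1) step.prems] by blast
  then show ?case
    by (rule step.IH)
qed

end
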